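(* Let $\mathcal A=(a_{ij})$ be a symmetric $3\times3$ matrix (indices $0,1,2$) and let $\mathcal B$ be the symmetric matrix with $b_{22}=1$ and all other entries $0$. Let $\mathbf V(s,t)=(s^2,st,t^2)^T$, $\mathbf F(s,t)=(\mathcal A\mathbf V(s,t))\times(\mathcal B\mathbf V(s,t))=(F^{(1)},F^{(2)},F^{(3)})^T$, $Q(s,t)=(F^{(2)})^2-F^{(1)}F^{(3)}$. Put $a_1=a_{00}$, $a_2=a_{01}$, $a_3=a_{02}$, $a_4=a_{11}$, $a_5=a_{12}$, and let $(k_n,l_n)$ be a sequence of nonzero numbers satisfying $$k_{n+1}l_{n-1}=-\big(k_{n-1}l_{n+1}+a_2k_n^2+a_4k_nl_n+a_5l_n^2\big),\qquad l_{n+1}l_{n-1}=a_1k_n^2+a_2k_nl_n+a_3l_n^2 .$$ Then $r_n=-l_n^2l_{n+1}^2$, $s_n=k_n$, $t_n=l_n$ satisfy the system $$r_nr_{n-1}=Q(s_n,t_n),\quad s_{n+1}r_{n-1}=t_{n-1}F^{(1)}(s_n,t_n)-s_{n-1}F^{(2)}(s_n,t_n),\quad t_{n+1}r_{n-1}=t_{n-1}F^{(2)}(s_n,t_n)-s_{n-1}F^{(3)}(s_n,t_n).$$ *)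

theory Defs
  imports "HOL-Analysis.Analysis"
begin

(* Paper index i (i = 0,1,2) corresponds to Isabelle index i+1 :: 3,
   since vector [x,y,z] has components $1 = x, $2 = y, $3 = z. *)

definition matB :: "real^3^3" where
  "matB = (\<chi> i j. if i = 3 \<and> j = 3 then 1 else 0)"

definition vecV :: "real \<Rightarrow> real \<Rightarrow> real^3" where
  "vecV s t = vector [s^2, s*t, t^2]"

definition vecF :: "real^3^3 \<Rightarrow> real \<Rightarrow> real \<Rightarrow> real^3" where
  "vecF A s t = cross3 (A *v vecV s t) (matB *v vecV s t)"

definition Qf :: "real^3^3 \<Rightarrow> real \<Rightarrow> real \<Rightarrow> real" where
  "Qf A s t = (vecF A s t $ 2)^2 - (vecF A s t $ 1) * (vecF A s t $ 3)"

end

theory Submission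
  imports Defs
begin

text \<open>Since \<open>matB *v vecV s t = (0, 0, t\<^sup>2)\<close>, the vector \<open>vecF A s t\<close> is \<open>t\<^sup>2\<close> times the first two
  entries of \<open>A *v vecV s t\<close>, swapped and with a sign, so \<open>Qf A s t = t\<^sup>4 ((A *v vecV s t)$1)\<^sup>2\<close>.
  By the symmetry of \<open>A\<close>, the recurrences say that, at \<open>V = vecV (k n) (l n)\<close>,
  \<open>(A *v V)$1 = l(n+1) l(n-1)\<close> and \<open>(A *v V)$2 = -(k(n+1) l(n-1) + k(n-1) l(n+1))\<close>;
  after substituting these, all three identities are ring identities.\<close>

lemma matrix_vector_mult_vecV:
  "(A *v vecV s t) $ i = A$i$1 * s^2 + A$i$2 * (s*t) + A$i$3 * t^2"
  by (simp add: vecV_def matrix_vector_mult_def sum_3 vector_3)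

lemma vecF_components:
  "vecF A s t $ 1 = t^2 * (A *v vecV s t) $ 2"
  "vecF A s t $ 2 = - (t^2 * (A *v vecV s t) $ 1)"
  "vecF A s t $ 3 = 0"
  by (simp_all add: vecF_def cross3_simps matB_def vecV_def matrix_vector_mult_def
      sum_3 vector_3)

lemma Qf_eq: "Qf A s t = t^4 * ((A *v vecV s t) $ 1)^2"
  by (simp add: Qf_def vecF_components algebra_simps power4_eq_xxxx power2_eq_square)

theorem theorem11:
  fixes A :: "real^3^3" and k l r s t :: "nat \<Rightarrow> real"
  assumes symA: "transpose A = A"
    and nzk: "\<And>n. k n \<noteq> 0" and nzl: "\<And>n. l n \<noteq> 0"
    and rec1: "\<And>n. n \<ge> 1 \<Longrightarrow> k (n+1) * l (n-1) =
        - (k (n-1) * l (n+1) + A$1$2 * (k n)^2 + A$2$2 * k n * l n + A$2$3 * (l n)^2)"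
    and rec2: "\<And>n. n \<ge> 1 \<Longrightarrow> l (n+1) * l (n-1) =
        A$1$1 * (k n)^2 + A$1$2 * k n * l n + A$1$3 * (l n)^2"
    and r_def: "\<And>n. r n = - ((l n)^2 * (l (n+1))^2)"
    and s_def: "\<And>n. s n = k n" and t_def: "\<And>n. t n = l n"
  shows "\<forall>n\<ge>1.
      r n * r (n-1) = Qf A (s n) (t n) \<and>
      s (n+1) * r (n-1) = t (n-1) * vecF A (s n) (t n) $ 1 - s (n-1) * vecF A (s n) (t n) $ 2 \<and>
      t (n+1) * r (n-1) = t (n-1) * vecF A (s n) (t n) $ 2 - s (n-1) * vecF A (s n) (t n) $ 3"
proof (intro allI impI)
  fix n :: nat assume n: "n \<ge> 1"
  have "A$2$1 = A$1$2"
    using arg_cong[OF symA, of "\<lambda>M. M$2$1"] by (simp add: transpose_def)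
  then have AV1: "(A *v vecV (k n) (l n)) $ 1 = l (n+1) * l (n-1)"
    and AV2: "(A *v vecV (k n) (l n)) $ 2 = - (k (n+1) * l (n-1) + k (n-1) * l (n+1))"
    using rec1[OF n] rec2[OF n] by (simp_all add: matrix_vector_mult_vecV)
  have r_pred: "r (n-1) = - ((l (n-1))^2 * (l n)^2)"
    using r_def[of "n-1"] n by simp
  show "r n * r (n-1) = Qf A (s n) (t n) \<and>
      s (n+1) * r (n-1) = t (n-1) * vecF A (s n) (t n) $ 1 - s (n-1) * vecF A (s n) (t n) $ 2 \<and>
      t (n+1) * r (n-1) = t (n-1) * vecF A (s n) (t n) $ 2 - s (n-1) * vecF A (s n) (t n) $ 3"
    unfolding r_pred unfolding r_def s_def t_def Qf_eq vecF_components AV1 AV2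
    by (intro conjI) algebra+
qed

end
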